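(* Let $\mathcal G$ be a game of rank $n$ and $x=n\bmod 2$. Then $\mathcal C_n(\mathcal G)$ is a $(1-x)$-trap.
   Context: A game of rank $n$ is a tuple $\mathcal G=(S,S^0,S^1,S^R,\to,P,\mathrm{Col})$: $S$ is a set of states partitioned into pairwise disjoint sets $S^0$ (states of Player 0), $S^1$ (states of Player 1) and $S^R$ (random states); $\to\subseteq S\times S$ is a transition relation in which every state has at least one and at most countably many successors; $P:S^R\times S\to[0,1]$ satisfies $P(s,s')>0\iff s\to s'$ and $\sum_{s'}P(s,s')=1$ for $s\in S^R$; $\mathrm{Col}:S\to\{0,\dots,n\}$. Write $\mathrm{Post}(s)=\{s':s\to s'\}$, $\mathrm{Pre}(Q)=\{s:\exists s'\in Q,\ s\to s'\}$, $\widetilde{\mathrm{Pre}}(Q)=S\setminus\mathrm{Pre}(S\setminus Q)$. A set $Q\subseteq S$ is sink-free if $\mathrm{Post}(s)\cap Q\neq\emptyset$ for all $s\in Q$; closable if it is sink-free and $\mathrm{Post}(s)\subseteq Q$ for all $s\in Q\cap S^R$; an $x$-trap if it is closable and $\mathrm{Post}(s)\subseteq Q$ for all $s\in Q\cap S^x$. Force sets: for $x\in\{0,1\}$ and $T\subseteq S$ let $R_0=T$, $R_{\alpha+1}=R_\alpha\cup(S^R\cap\mathrm{Pre}(R_\alpha))\cup(S^x\cap\mathrm{Pre}(R_\alpha))\cup(S^{1-x}\cap\widetilde{\mathrm{Pre}}(R_\alpha))$, $R_\lambda=\bigcup_{\alpha<\lambda}R_\alpha$ for limit ordinals $\lambda$;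 with $\gamma$ the least ordinal such that $R_{\gamma+1}=R_\gamma$, set $\mathrm{Force}^x(\mathcal G,T)=R_\gamma$. Sub-games: if $S\setminus Q$ is closable, $\mathcal G\ominus Q$ is the game on state set $S\setminus Q$ with the partition, transition relation, probability function and coloring restricted to $S\setminus Q$. The sets $\mathcal C_n$: $\mathcal C_0(\mathcal G)=S$. For $n\ge1$ and $x=n\bmod 2$ define by transfinite induction $X_\alpha=\mathrm{Force}^{1-x}(\mathcal G,\bigcup_{\beta<\alpha}Y_\beta)$, $Z_\alpha=\mathrm{Force}^x(\mathcal G\ominus X_\alpha,\{s\in S\setminus X_\alpha:\mathrm{Col}(s)=n\})$, $Y_\alpha=X_\alpha\cup\mathcal C_{n-1}((\mathcal G\ominus X_\alpha)\ominus Z_\alpha)$ (the sub-games are well defined, and $(\mathcal G\ominus X_\alpha)\ominus Z_\alpha$ has no state of color $n$, hence is regarded as a game of rank $n-1$); with $\gamma$ the least ordinal such that $X_{\gamma+1}=X_\gamma$, set $\mathcal C_n(\mathcal G)=S\setminus X_\gamma$. *)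

theory Defs
  imports "HOL-Analysis.Analysis"
begin

record 'a game =
  st    :: "'a set"
  st0   :: "'a set"
  st1   :: "'a set"
  stR   :: "'a set"
  edges :: "('a \<times> 'a) set"
  prob  :: "'a \<Rightarrow> 'a \<Rightarrow> real"
  col   :: "'a \<Rightarrow> nat"

definition Post :: "'a game \<Rightarrow> 'a \<Rightarrow> 'a set" where
  "Post G s = {s'. (s, s') \<in> edges G}"

definition game_of_rank :: "'a game \<Rightarrow> nat \<Rightarrow> bool" where
  "game_of_rank G n \<longleftrightarrow>
     st0 G \<union> st1 G \<union> stR G = st G \<and>
     st0 G \<inter> st1 G = {} \<and> st0 G \<inter> stR G = {} \<and> st1 G \<inter> stR G = {} \<and>
     edges G \<subseteq> st G \<times> st G \<and>
     (\<forall>s\<in>st G. Post G s \<noteq> {} \<and> countable (Post G s)) \<and>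
     (\<forall>s\<in>stR G. (\<forall>s'\<in>st G. 0 \<le> prob G s s' \<and> prob G s s' \<le> 1 \<and>
                     (0 < prob G s s' \<longleftrightarrow> (s, s') \<in> edges G)) \<and>
                  ((\<lambda>s'. prob G s s') has_sum 1) (st G)) \<and>
     (\<forall>s\<in>st G. col G s \<le> n)"

definition player :: "'a game \<Rightarrow> nat \<Rightarrow> 'a set" where
  "player G x = (if x = 0 then st0 G else st1 G)"

definition Pre :: "'a game \<Rightarrow> 'a set \<Rightarrow> 'a set" where
  "Pre G Q = {s \<in> st G. \<exists>s'\<in>Q. (s, s') \<in> edges G}"

definition PreT :: "'a game \<Rightarrow> 'a set \<Rightarrow> 'a set" where
  "PreT G Q = st G - Pre G (st G - Q)"

definition sink_free :: "'a game \<Rightarrow> 'a set \<Rightarrow> bool" where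
  "sink_free G Q \<longleftrightarrow> (\<forall>s\<in>Q. Post G s \<inter> Q \<noteq> {})"

definition closable :: "'a game \<Rightarrow> 'a set \<Rightarrow> bool" where
  "closable G Q \<longleftrightarrow> sink_free G Q \<and> (\<forall>s\<in>Q \<inter> stR G. Post G s \<subseteq> Q)"

definition trap :: "'a game \<Rightarrow> nat \<Rightarrow> 'a set \<Rightarrow> bool" where
  "trap G x Q \<longleftrightarrow> closable G Q \<and> (\<forall>s\<in>Q \<inter> player G x. Post G s \<subseteq> Q)"

text \<open>The stages of the transfinite iteration R_0 = a, R_(alpha+1) = f R_alpha,
  R_lambda = union of the earlier stages (for an inflationary f this family is
  exactly the chain of stages). Its union is the stationary value R_gamma.\<close>

inductive_set tf_stages :: "('a set \<Rightarrow> 'a set) \<Rightarrow> 'a set \<Rightarrow> 'a set set"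
  for f :: "'a set \<Rightarrow> 'a set" and a :: "'a set" where
  tf_succ: "R \<in> tf_stages f a \<Longrightarrow> f R \<in> tf_stages f a"
| tf_lim:  "\<forall>R\<in>M. R \<in> tf_stages f a \<Longrightarrow> a \<union> \<Union>M \<in> tf_stages f a"

definition tf_limit :: "('a set \<Rightarrow> 'a set) \<Rightarrow> 'a set \<Rightarrow> 'a set" where
  "tf_limit f a = \<Union>(tf_stages f a)"

definition force_step :: "'a game \<Rightarrow> nat \<Rightarrow> 'a set \<Rightarrow> 'a set" where
  "force_step G x R = R \<union> (stR G \<inter> Pre G R) \<union> (player G x \<inter> Pre G R)
                        \<union> (player G (1 - x) \<inter> PreT G R)"

definition Force :: "'a game \<Rightarrow> nat \<Rightarrow> 'a set \<Rightarrow> 'a set" where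
  "Force G x T = tf_limit (force_step G x) T"

text \<open>Sub-game G minus Q (only used when the complement of Q is closable).\<close>
definition subgame :: "'a game \<Rightarrow> 'a set \<Rightarrow> 'a game" where
  "subgame G Q = \<lparr> st = st G - Q, st0 = st0 G - Q, st1 = st1 G - Q, stR = stR G - Q,
     edges = edges G \<inter> ((st G - Q) \<times> (st G - Q)), prob = prob G, col = col G \<rparr>"

text \<open>C_(m+1): with U_alpha = union of Y_beta (beta < alpha) we have
  U_(alpha+1) = U_alpha \<union> Y_alpha, U_lambda = union, X_alpha = Force^(1-x)(U_alpha);
  the stationary X_gamma is Force^(1-x) of the stationary U.\<close>
primrec Cn :: "nat \<Rightarrow> 'a game \<Rightarrow> 'a set" where
  "Cn 0 G = st G"
| "Cn (Suc m) G =
     (let n = Suc m; x = n mod 2;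
          Xof = (\<lambda>U. Force G (1 - x) U);
          Zof = (\<lambda>X. Force (subgame G X) x {s \<in> st G - X. col G s = n});
          Yof = (\<lambda>X. X \<union> Cn m (subgame (subgame G X) (Zof X)));
          U = tf_limit (\<lambda>U. U \<union> Yof (Xof U)) {}
      in st G - Xof U)"

end

theory Submission
  imports Defs
begin

text \<open>
  For n = 0 the set C_0(G) is the whole state space, which is a trap
  for either player because every state has a successor and all successors lie in S.
  For n \<ge> 1 the definition of C_n unfolds to S minus a force set
  X = Force^(1-x)(G, U) for some (stationary) U.  A force set is the stationary value
  of a transfinite iteration, hence it is closed under one more force step.  Finally,
  the complement of any set closed under the force step of player y is a y-trap:
  random states and y-states outside the set have no edge into it (else the force
  step would absorb them), and (1-y)-states outside it have some edge out of it
  (else the dual predecessor operator would absorb them).  With y = 1 - x this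
  gives the theorem.
\<close>

text \<open>The union of all stages of a transfinite iteration is itself a stage, hence it
  is a fixed point: applying the step function once more adds nothing.\<close>
lemma tf_limit_closed: "f (tf_limit f a) \<subseteq> tf_limit f a"
proof -
  have a_sub: "a \<subseteq> \<Union>(tf_stages f a)"
    using tf_stages.tf_lim[of "{}" f a] by auto
  have "a \<union> \<Union>(tf_stages f a) \<in> tf_stages f a"
    by (rule tf_stages.tf_lim) auto
  hence "tf_limit f a \<in> tf_stages f a"
    using a_sub unfolding tf_limit_def by (simp add: sup_absorb2)
  hence "f (tf_limit f a) \<in> tf_stages f a"
    by (rule tf_stages.tf_succ)
  thus ?thesis unfolding tf_limit_def by auto
qed

lemma Force_closed: "force_step G x (Force G x T) \<subseteq> Force G x T"
  unfolding Force_def by (rule tf_limit_closed)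

lemma game_states:
  assumes "game_of_rank G n"
  shows "st G = st0 G \<union> st1 G \<union> stR G"
  using assms unfolding game_of_rank_def by simp

lemma game_Post:
  assumes "game_of_rank G n"
  shows "Post G s \<subseteq> st G" and "s \<in> st G \<Longrightarrow> Post G s \<noteq> {}"
  using assms unfolding game_of_rank_def Post_def by auto

lemma st_trap:
  assumes "game_of_rank G n"
  shows "trap G y (st G)"
  using game_Post[OF assms]
  unfolding trap_def closable_def sink_free_def by (auto simp: Int_absorb2)

lemma force_closed_Post_outside:
  assumes g: "game_of_rank G n" and closed: "force_step G y F \<subseteq> F"
    and s: "s \<in> st G - F" "s \<in> stR G \<union> player G y"
  shows "Post G s \<subseteq> st G - F"
proof (rule ccontr)
  assume "\<not> Post G s \<subseteq> st G - F"
  hence "Post G s \<inter> F \<noteq> {}" using game_Post(1)[OF g] by auto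
  hence "s \<in> Pre G F" using s unfolding Pre_def Post_def by auto
  hence "s \<in> force_step G y F" using s unfolding force_step_def by auto
  thus False using closed s by auto
qed

lemma force_closed_escape:
  assumes closed: "force_step G y F \<subseteq> F"
    and s: "s \<in> st G - F" "s \<in> player G (1 - y)"
  shows "Post G s \<inter> (st G - F) \<noteq> {}"
proof
  assume "Post G s \<inter> (st G - F) = {}"
  hence "s \<notin> Pre G (st G - F)" unfolding Pre_def Post_def by auto
  hence "s \<in> PreT G F" using s unfolding PreT_def by auto
  hence "s \<in> force_step G y F" using s unfolding force_step_def by auto
  thus False using closed s by auto
qed

lemma force_closed_compl_trap:
  assumes g: "game_of_rank G n" and y: "y \<le> (1::nat)"
    and closed: "force_step G y F \<subseteq> F"
  shows "trap G y (st G - F)"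
proof -
  have cover: "s \<in> stR G \<union> player G y \<or> s \<in> player G (1 - y)" if "s \<in> st G" for s
    using game_states[OF g] that y unfolding player_def by (cases y) auto
  have "sink_free G (st G - F)"
    unfolding sink_free_def
  proof
    fix s assume s: "s \<in> st G - F"
    show "Post G s \<inter> (st G - F) \<noteq> {}"
    proof (cases "s \<in> stR G \<union> player G y")
      case True
      thus ?thesis
        using force_closed_Post_outside[OF g closed s] game_Post(2)[OF g] s by auto
    next
      case False
      thus ?thesis using force_closed_escape[OF closed s] cover[of s] s by auto
    qed
  qed
  thus ?thesis
    using force_closed_Post_outside[OF g closed] unfolding trap_def closable_def by auto
qed

lemma Cn_Suc_compl_Force:
  "\<exists>U. Cn (Suc m) G = st G - Force G (1 - Suc m mod 2) U"
  unfolding Cn.simps Let_def by (rule exI, rule refl)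

theorem mainTheorem7:
  fixes G :: "'a game" and n :: nat
  assumes "game_of_rank G n"
  shows "trap G (1 - n mod 2) (Cn n G)"
proof (cases n)
  case 0
  thus ?thesis using st_trap[OF assms] by simp
next
  case (Suc m)
  from Cn_Suc_compl_Force
  obtain U where C: "Cn (Suc m) G = st G - Force G (1 - Suc m mod 2) U" ..
  show ?thesis
    unfolding Suc C by (rule force_closed_compl_trap[OF assms _ Force_closed]) simp
qed

end
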